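(* Let $x,y\in PSBT_n$ be distinct. If the vertices $x^v$ and $y^v$ of $\mathrm{PSB}(n)$ are not adjacent, then there exist at least two tours in $PSBT_n$, different from $x$ and $y$, all of whose arcs are arcs of the multigraph $x\cup y$.
   Context: Let $n\ge 3$ and let $D_n$ be the complete directed graph on the vertex set (cities) $\{1,\dots,n\}$ with arc set $E=\{(u,v):u\neq v\}$. A Hamiltonian tour is a directed Hamiltonian cycle in $D_n$; for a tour $\tau$, $\tau(i)$ denotes the successor of city $i$, and $\tau^k(i)$, $\tau^{-k}(i)$ denote the $k$-th successor and $k$-th predecessor of $i$. A city $i$ is a peak of $\tau$ if $\tau^{-1}(i)<i$ and $\tau(i)<i$. A city $i$ is a step-back peak of $\tau$ if either ($\tau^{-1}(i)<i$, $\tau(i)=i-1$ and $\tau^2(i)>i$) or ($\tau^{-2}(i)>i$, $\tau^{-1}(i)=i-1$ and $\tau(i)<i$). A proper peak is a peak that is not a step-back peak. A pyramidal tour with step-backs is a Hamiltonian tour whose only proper peak is $n$; $PSBT_n$ denotes the set of all such tours. For a tour $x$, $x^v\in\mathbb{R}^E$ is its characteristic vector ($x^v_e=1$ if arc $e$ belongs to $x$, and $0$ otherwise), and $\mathrm{PSB}(n)=\mathrm{conv}\{x^v: x\in PSBT_n\}$; its vertices are the vectors $x^v$, $x\in PSBT_n$. Two vertices are adjacent if the segment joining them is an edge (one-dimensional face) of $\mathrm{PSB}(n)$. For tours $x,y$, $x\cup y$ denotes the multigraph on $\{1,\dots,n\}$ containing all arcs of $x$ and all arcs of $y$ (arcs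 common to both counted twice). *)

theory Defs
  imports "HOL-Analysis.Analysis" "HOL-Library.Function_Algebras"
begin

text \<open>Real vector space structure on functions (pointwise), so that
  characteristic vectors in R^E can be represented as functions
  nat \<times> nat \<Rightarrow> real (supported on the arc set E).\<close>

instantiation "fun" :: (type, real_vector) real_vector
begin
definition scaleR_fun :: "real \<Rightarrow> ('a \<Rightarrow> 'b) \<Rightarrow> 'a \<Rightarrow> 'b"
  where "scaleR_fun r f = (\<lambda>x. r *\<^sub>R f x)"
instance
  by standard (auto simp: scaleR_fun_def fun_eq_iff scaleR_add_right scaleR_add_left)
end

text \<open>A Hamiltonian tour on cities {1..n}, given by its successor function;
  normalised to be the identity outside {1..n}.\<close>
definition tour :: "nat \<Rightarrow> (nat \<Rightarrow> nat) \<Rightarrow> bool" where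
  "tour n \<tau> \<longleftrightarrow> bij_betw \<tau> {1..n} {1..n}
     \<and> (\<forall>i. i \<notin> {1..n} \<longrightarrow> \<tau> i = i)
     \<and> (\<forall>i\<in>{1..n}. \<tau> i \<noteq> i)
     \<and> (\<forall>i\<in>{1..n}. \<forall>j\<in>{1..n}. \<exists>k. (\<tau> ^^ k) i = j)"

definition pred_city :: "nat \<Rightarrow> (nat \<Rightarrow> nat) \<Rightarrow> nat \<Rightarrow> nat" where
  "pred_city n \<tau> i = inv_into {1..n} \<tau> i"

definition peak :: "nat \<Rightarrow> (nat \<Rightarrow> nat) \<Rightarrow> nat \<Rightarrow> bool" where
  "peak n \<tau> i \<longleftrightarrow> pred_city n \<tau> i < i \<and> \<tau> i < i"

definition step_back_peak :: "nat \<Rightarrow> (nat \<Rightarrow> nat) \<Rightarrow> nat \<Rightarrow> bool" where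
  "step_back_peak n \<tau> i \<longleftrightarrow>
     (pred_city n \<tau> i < i \<and> \<tau> i = i - 1 \<and> (\<tau> ^^ 2) i > i)
   \<or> (pred_city n \<tau> (pred_city n \<tau> i) > i \<and> pred_city n \<tau> i = i - 1 \<and> \<tau> i < i)"

definition proper_peak :: "nat \<Rightarrow> (nat \<Rightarrow> nat) \<Rightarrow> nat \<Rightarrow> bool" where
  "proper_peak n \<tau> i \<longleftrightarrow> peak n \<tau> i \<and> \<not> step_back_peak n \<tau> i"

definition PSBT :: "nat \<Rightarrow> (nat \<Rightarrow> nat) set" where
  "PSBT n = {\<tau>. tour n \<tau> \<and> (\<forall>i\<in>{1..n}. proper_peak n \<tau> i \<longleftrightarrow> i = n)}"

definition arcs :: "nat \<Rightarrow> (nat \<Rightarrow> nat) \<Rightarrow> (nat \<times> nat) set" where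
  "arcs n \<tau> = {(i, \<tau> i) | i. i \<in> {1..n}}"

definition charvec :: "nat \<Rightarrow> (nat \<Rightarrow> nat) \<Rightarrow> (nat \<times> nat \<Rightarrow> real)" where
  "charvec n \<tau> = (\<lambda>e. if e \<in> arcs n \<tau> then 1 else 0)"

definition PSB :: "nat \<Rightarrow> (nat \<times> nat \<Rightarrow> real) set" where
  "PSB n = convex hull (charvec n ` PSBT n)"

definition adjacent :: "nat \<Rightarrow> (nat \<Rightarrow> nat) \<Rightarrow> (nat \<Rightarrow> nat) \<Rightarrow> bool" where
  "adjacent n x y \<longleftrightarrow> closed_segment (charvec n x) (charvec n y) face_of PSB n"

end

theory Submission
  imports Defs
begin

text \<open>The tours all of whose arcs lie in \<open>x \<union> y\<close> are exactly the vertices of \<open>PSB(n)\<close> on which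
  the nonnegative functional "number of arcs outside \<open>x \<union> y\<close>" vanishes, so they span a face.
  If that face has no vertex besides \<open>x\<^sup>v, y\<^sup>v\<close>, it is the segment, i.e. the two vertices are
  adjacent. If it has exactly one further vertex \<open>z\<^sup>v\<close>, then the arc sets of \<open>x, y, z\<close> are
  distinct sets of equal size with \<open>z \<subseteq> x \<union> y\<close>, and a simple affine functional vanishes on
  \<open>x\<^sup>v, y\<^sup>v\<close> and is positive at \<open>z\<^sup>v\<close>; so the segment is a face of the triangle, hence of
  \<open>PSB(n)\<close>.\<close>

lemma affine_functional_convex_combination:
  fixes h :: "'v::real_vector \<Rightarrow> real"
  assumes "linear h" "finite S" "sum u S = 1"
  shows "c + h (\<Sum>v\<in>S. u v *\<^sub>R v) = (\<Sum>v\<in>S. u v * (c + h v))"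
  using assms by (simp add: linear_sum linear_scale distrib_left sum.distrib
      flip: sum_distrib_right)

lemma affine_functional_nonneg_convex_hull:
  fixes h :: "'v::real_vector \<Rightarrow> real"
  assumes "linear h" "\<And>v. v \<in> V \<Longrightarrow> c + h v \<ge> 0" "p \<in> convex hull V"
  shows "c + h p \<ge> 0"
proof -
  from assms(3) obtain S u where S: "finite S" "S \<subseteq> V" "\<forall>v\<in>S. 0 \<le> u v" "sum u S = 1"
    "(\<Sum>v\<in>S. u v *\<^sub>R v) = p" unfolding convex_hull_explicit by blast
  have "c + h p = (\<Sum>v\<in>S. u v * (c + h v))"
    using affine_functional_convex_combination[OF assms(1) S(1,4)] S(5) by simp
  also have "\<dots> \<ge> 0" using S(2,3) assms(2) by (intro sum_nonneg) auto
  finally show ?thesis .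
qed

lemma convex_hull_zero_set_affine_functional:
  fixes h :: "'v::real_vector \<Rightarrow> real"
  assumes "linear h" and nonneg: "\<And>v. v \<in> V \<Longrightarrow> c + h v \<ge> 0"
  shows "{p \<in> convex hull V. c + h p = 0} = convex hull {v \<in> V. c + h v = 0}"
    (is "?Z = convex hull ?Q")
proof
  show "?Z \<subseteq> convex hull ?Q"
  proof
    fix p assume "p \<in> ?Z"
    then obtain S u where S: "finite S" "S \<subseteq> V" "\<forall>v\<in>S. 0 \<le> u v" "sum u S = 1"
      "(\<Sum>v\<in>S. u v *\<^sub>R v) = p" and p0: "c + h p = 0"
      unfolding convex_hull_explicit by blast
    have terms_nonneg: "\<forall>v\<in>S. 0 \<le> u v * (c + h v)" using S(2,3) nonneg by auto
    have "(\<Sum>v\<in>S. u v * (c + h v)) = 0"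
      using affine_functional_convex_combination[OF assms(1) S(1,4)] S(5) p0 by simp
    then have terms_zero: "\<forall>v\<in>S. u v * (c + h v) = 0"
      using terms_nonneg by (simp add: sum_nonneg_eq_0_iff[OF S(1)])
    define S' where "S' = {v\<in>S. c + h v = 0}"
    have S': "finite S'" "S' \<subseteq> S" "S' \<subseteq> ?Q" using S(1,2) unfolding S'_def by auto
    have outside_zero: "\<forall>v\<in>S - S'. u v = 0" using terms_zero unfolding S'_def by auto
    have "sum u S' = 1"
      using sum.mono_neutral_right[OF S(1) S'(2), of u] outside_zero S(4) by simp
    moreover have "(\<Sum>v\<in>S'. u v *\<^sub>R v) = p"
      using sum.mono_neutral_right[OF S(1) S'(2), of "\<lambda>v. u v *\<^sub>R v"] outside_zero S(5)
      by simp
    moreover have "\<forall>v\<in>S'. 0 \<le> u v" using S(3) S'(2) by blast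
    ultimately show "p \<in> convex hull ?Q"
      unfolding convex_hull_explicit using S'(1,3) by blast
  qed
next
  show "convex hull ?Q \<subseteq> ?Z"
  proof
    fix p assume p: "p \<in> convex hull ?Q"
    then obtain S u where S: "finite S" "S \<subseteq> ?Q" "sum u S = 1" "(\<Sum>v\<in>S. u v *\<^sub>R v) = p"
      unfolding convex_hull_explicit by blast
    have "c + h p = (\<Sum>v\<in>S. u v * (c + h v))"
      using affine_functional_convex_combination[OF assms(1) S(1,3)] S(4) by simp
    also have "\<dots> = 0" using S(2) by (intro sum.neutral) auto
    finally have "c + h p = 0" .
    moreover have "p \<in> convex hull V" using p hull_mono[of ?Q V] by blast
    ultimately show "p \<in> ?Z" by blast
  qed
qed

lemma face_of_zero_set_affine_functional:
  fixes h :: "'v::real_vector \<Rightarrow> real"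
  assumes "linear h" "convex S" and nonneg: "\<And>p. p \<in> S \<Longrightarrow> c + h p \<ge> 0"
  shows "{p \<in> S. c + h p = 0} face_of S"
  unfolding face_of_def
proof (intro conjI ballI impI)
  show "convex {p \<in> S. c + h p = 0}"
    unfolding convex_def
  proof (intro ballI allI impI)
    fix p q and u v :: real
    assume pq: "p \<in> {p \<in> S. c + h p = 0}" "q \<in> {p \<in> S. c + h p = 0}" and "u + v = 1"
    have "c + h (u *\<^sub>R p + v *\<^sub>R q) = u * (c + h p) + v * (c + h q) + (1 - (u + v)) * c"
      by (simp add: linear_add[OF assms(1)] linear_scale[OF assms(1)] algebra_simps)
    then show "u *\<^sub>R p + v *\<^sub>R q \<in> {p \<in> S. c + h p = 0}" if "0 \<le> u" "0 \<le> v"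
      using pq that assms(2) \<open>u + v = 1\<close> unfolding convex_def by auto
  qed
  fix a b p assume "a \<in> S" "b \<in> S" "p \<in> {p \<in> S. c + h p = 0}" "p \<in> open_segment a b"
  then obtain t where t: "0 < t" "t < 1" "p = (1 - t) *\<^sub>R a + t *\<^sub>R b" and p0: "c + h p = 0"
    and ab: "c + h a \<ge> 0" "c + h b \<ge> 0"
    using nonneg unfolding in_segment by blast
  have "(1 - t) * (c + h a) + t * (c + h b) = 0"
    using p0 unfolding t(3) linear_add[OF assms(1)] linear_scale[OF assms(1)]
    by (simp add: algebra_simps)
  then have "c + h a = 0" "c + h b = 0"
    using t(1,2) ab by (smt (verit) mult_nonneg_nonneg mult_pos_pos)+
  then show "a \<in> {p \<in> S. c + h p = 0}" "b \<in> {p \<in> S. c + h p = 0}"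
    using \<open>a \<in> S\<close> \<open>b \<in> S\<close> by auto
qed auto

lemma face_of_convex_hull_zero_set_affine_functional:
  fixes h :: "'v::real_vector \<Rightarrow> real"
  assumes "linear h" "\<And>v. v \<in> V \<Longrightarrow> c + h v \<ge> 0"
  shows "convex hull {v \<in> V. c + h v = 0} face_of convex hull V"
proof -
  have "{p \<in> convex hull V. c + h p = 0} face_of convex hull V"
    by (rule face_of_zero_set_affine_functional[OF assms(1) convex_convex_hull])
      (rule affine_functional_nonneg_convex_hull[OF assms])
  then show ?thesis by (simp only: convex_hull_zero_set_affine_functional[OF assms])
qed

lemma linear_eval: "linear (\<lambda>f :: 'a \<Rightarrow> 'b::real_vector. f a)"
  by (rule linearI) (simp_all add: plus_fun_def scaleR_fun_def)

lemma linear_sum_eval: "linear (\<lambda>f :: 'a \<Rightarrow> 'b::real_vector. \<Sum>a\<in>A. f a)"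
  by (rule linearI) (simp_all add: plus_fun_def scaleR_fun_def sum.distrib scaleR_sum_right)

lemma equal_card_sets_cases:
  fixes U V W :: "'a set"
  assumes "finite U" "finite V" "card U = card V" "U \<noteq> V"
    and "W \<subseteq> U \<union> V" "W \<noteq> U" "W \<noteq> V"
  obtains e where "e \<in> U \<inter> V" "e \<notin> W"
  | a b where "a \<in> U - V" "b \<in> V - U" "a \<in> W" "b \<in> W"
  | a b where "a \<in> U - V" "b \<in> V - U" "a \<notin> W" "b \<notin> W"
proof -
  have "\<not> U \<subseteq> V" "\<not> V \<subseteq> U"
    using card_subset_eq[OF assms(2)] card_subset_eq[OF assms(1)] assms(3,4) by metis+
  then obtain a0 b0 where a0: "a0 \<in> U - V" and b0: "b0 \<in> V - U" by blast
  show thesis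
  proof (cases "U \<inter> V \<subseteq> W")
    case False
    then show thesis using that(1) by blast
  next
    case common_in_W: True
    consider (a0_in) "a0 \<in> W" "V - U \<subseteq> - W" | (a0_out) "a0 \<notin> W" "V - U \<subseteq> W"
      | (b_like_a0) b where "b \<in> V - U" "a0 \<in> W \<longleftrightarrow> b \<in> W"
      by blast
    then show thesis
    proof cases
      case a0_in
      have "W \<subseteq> U" using a0_in(2) assms(5) by blast
      then have "\<not> U - V \<subseteq> W" using common_in_W assms(6) by blast
      then show thesis using that(3) b0 a0_in(2) by blast
    next
      case a0_out
      have "V \<subseteq> W" using a0_out(2) common_in_W by blast
      then have "\<not> U - V \<subseteq> - W" using assms(5,7) by blast
      then show thesis using that(2) b0 a0_out(2) by blast
    next
      case b_like_a0
      then show thesis using that(2,3) a0 by blast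
    qed
  qed
qed

lemma separating_functional_indicators:
  fixes U V W :: "'a set"
  assumes "finite U" "finite V" "card U = card V" "U \<noteq> V"
    and "W \<subseteq> U \<union> V" "W \<noteq> U" "W \<noteq> V"
  obtains c and h :: "('a \<Rightarrow> real) \<Rightarrow> real" where "linear h"
    "c + h (indicator U) = 0" "c + h (indicator V) = 0" "c + h (indicator W) > 0"
  using assms
proof (cases rule: equal_card_sets_cases)
  case (1 e)
  show thesis
    by (rule that[of "\<lambda>f. - f e" 1]) (use 1 linear_compose_neg[OF linear_eval] in auto)
next
  case (2 a b)
  then have "a \<noteq> b" by blast
  show thesis
    by (rule that[of "\<lambda>f. f a + f b" "-1"])
      (use 2 \<open>a \<noteq> b\<close> linear_compose_add[OF linear_eval linear_eval] in auto)
next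
  case (3 a b)
  then have "a \<noteq> b" by blast
  show thesis
    by (rule that[of "\<lambda>f. - (f a + f b)" 1])
      (use 3 \<open>a \<noteq> b\<close> linear_compose_neg[OF linear_compose_add[OF linear_eval linear_eval]]
        in auto)
qed

lemma closed_segment_face_of_indicator_triangle:
  fixes U V W :: "'a set"
  assumes "finite U" "finite V" "card U = card V" "U \<noteq> V"
    and "W \<subseteq> U \<union> V" "W \<noteq> U" "W \<noteq> V"
  shows "closed_segment (indicator U) (indicator V :: 'a \<Rightarrow> real)
           face_of convex hull {indicator U, indicator V, indicator W}"
proof -
  obtain c and h :: "('a \<Rightarrow> real) \<Rightarrow> real" where h: "linear h"
    "c + h (indicator U) = 0" "c + h (indicator V) = 0" "c + h (indicator W) > 0"
    using separating_functional_indicators[OF assms] by blast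
  have zero_set: "{v \<in> {indicator U, indicator V, indicator W}. c + h v = 0}
      = {indicator U, indicator V}"
    using h(2-4) by auto
  have "convex hull {v \<in> {indicator U, indicator V, indicator W}. c + h v = 0}
      face_of convex hull {indicator U, indicator V, indicator W}"
    by (rule face_of_convex_hull_zero_set_affine_functional[OF h(1)]) (use h(2-4) in auto)
  then show ?thesis by (simp only: zero_set segment_convex_hull)
qed

lemma tour_arcs:
  assumes "tour n z"
  shows "arcs n z \<subseteq> {1..n} \<times> {1..n}" "finite (arcs n z)" "card (arcs n z) = n"
proof -
  have arcs_image: "arcs n z = (\<lambda>i. (i, z i)) ` {1..n}" unfolding arcs_def by auto
  have "z ` {1..n} = {1..n}" using assms unfolding tour_def bij_betw_def by blast
  then show "arcs n z \<subseteq> {1..n} \<times> {1..n}" unfolding arcs_image by auto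
  show "finite (arcs n z)" unfolding arcs_image by simp
  have "inj_on (\<lambda>i. (i, z i)) {1..n}" by (auto simp: inj_on_def)
  then show "card (arcs n z) = n" unfolding arcs_image by (simp add: card_image)
qed

lemma tour_eqI_arcs:
  assumes "tour n z" "tour n z'" "arcs n z = arcs n z'"
  shows "z = z'"
proof
  fix i
  show "z i = z' i"
  proof (cases "i \<in> {1..n}")
    case True
    then have "(i, z i) \<in> arcs n z'" using assms(3) unfolding arcs_def by blast
    then show ?thesis unfolding arcs_def by auto
  next
    case False
    then show ?thesis using assms(1,2) unfolding tour_def by simp
  qed
qed

lemma charvec_eq_indicator: "charvec n z = indicator (arcs n z)"
  by (simp add: charvec_def indicator_def fun_eq_iff)

lemma face_of_PSB_tours_within_arcs:
  "convex hull (charvec n ` {z \<in> PSBT n. arcs n z \<subseteq> A}) face_of PSB n"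
proof -
  let ?outside = "{1..n} \<times> {1..n} - A"
  let ?h = "\<lambda>f :: nat \<times> nat \<Rightarrow> real. \<Sum>e\<in>?outside. f e"
  have count_outside: "?h (charvec n z) \<ge> 0 \<and> (?h (charvec n z) = 0 \<longleftrightarrow> arcs n z \<subseteq> A)"
    if "z \<in> PSBT n" for z
  proof
    show "?h (charvec n z) \<ge> 0" by (simp add: charvec_eq_indicator sum_nonneg)
    have "arcs n z \<subseteq> {1..n} \<times> {1..n}" using that tour_arcs(1) unfolding PSBT_def by blast
    moreover have "?h (charvec n z) = 0 \<longleftrightarrow> (\<forall>e\<in>?outside. e \<notin> arcs n z)"
      by (simp add: charvec_eq_indicator sum_nonneg_eq_0_iff indicator_eq_0_iff)
    ultimately show "?h (charvec n z) = 0 \<longleftrightarrow> arcs n z \<subseteq> A" by blast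
  qed
  have zero_set: "{v \<in> charvec n ` PSBT n. 0 + ?h v = 0} = charvec n ` {z \<in> PSBT n. arcs n z \<subseteq> A}"
    using count_outside by auto
  have "convex hull {v \<in> charvec n ` PSBT n. 0 + ?h v = 0} face_of PSB n"
    unfolding PSB_def
    by (rule face_of_convex_hull_zero_set_affine_functional[OF linear_sum_eval])
      (use count_outside in auto)
  then show ?thesis by (simp only: zero_set)
qed

lemma adjacent_if_one_other_tour_within_union:
  assumes "x \<in> PSBT n" "y \<in> PSBT n" "x \<noteq> y"
    and others: "\<And>z. z \<in> PSBT n \<Longrightarrow> arcs n z \<subseteq> arcs n x \<union> arcs n y \<Longrightarrow> z \<in> {x, y, w}"
  shows "adjacent n x y"
proof -
  let ?T = "{z \<in> PSBT n. arcs n z \<subseteq> arcs n x \<union> arcs n y}"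
  have face: "convex hull (charvec n ` ?T) face_of PSB n"
    by (rule face_of_PSB_tours_within_arcs)
  show ?thesis
  proof (cases "w \<in> ?T - {x, y}")
    case False
    then have "?T = {x, y}" using assms others by auto
    then show ?thesis using face unfolding adjacent_def by (simp add: segment_convex_hull)
  next
    case True
    then have T: "?T = {x, y, w}" using assms others by auto
    have tours: "tour n x" "tour n y" "tour n w" using assms True unfolding PSBT_def by auto
    have "closed_segment (charvec n x) (charvec n y) face_of convex hull (charvec n ` ?T)"
      unfolding T charvec_eq_indicator image_insert image_empty
    proof (rule closed_segment_face_of_indicator_triangle)
      show "finite (arcs n x)" "finite (arcs n y)" "card (arcs n x) = card (arcs n y)"
        using tour_arcs(2,3) tours(1,2) by auto
      show "arcs n x \<noteq> arcs n y" using tour_eqI_arcs[OF tours(1,2)] assms(3) by blast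
      show "arcs n w \<noteq> arcs n x" "arcs n w \<noteq> arcs n y"
        using tour_eqI_arcs[OF tours(3,1)] tour_eqI_arcs[OF tours(3,2)] True by auto
      show "arcs n w \<subseteq> arcs n x \<union> arcs n y" using True by blast
    qed
    then show ?thesis using face_of_trans face unfolding adjacent_def by blast
  qed
qed

theorem lemma2:
  fixes n :: nat and x y :: "nat \<Rightarrow> nat"
  assumes "n \<ge> 3" and "x \<in> PSBT n" and "y \<in> PSBT n" and "x \<noteq> y"
    and "\<not> adjacent n x y"
  shows "\<exists>z1 z2. z1 \<in> PSBT n \<and> z2 \<in> PSBT n \<and> z1 \<noteq> z2
           \<and> z1 \<notin> {x, y} \<and> z2 \<notin> {x, y}
           \<and> arcs n z1 \<subseteq> arcs n x \<union> arcs n y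
           \<and> arcs n z2 \<subseteq> arcs n x \<union> arcs n y"
proof (rule ccontr)
  define R where "R = {z \<in> PSBT n. z \<notin> {x, y} \<and> arcs n z \<subseteq> arcs n x \<union> arcs n y}"
  assume "\<not> ?thesis"
  then have "\<forall>z1\<in>R. \<forall>z2\<in>R. z1 = z2" unfolding R_def by blast
  then obtain w where "R \<subseteq> {w}" by blast
  then have "z \<in> {x, y, w}" if "z \<in> PSBT n" "arcs n z \<subseteq> arcs n x \<union> arcs n y" for z
    using that unfolding R_def by blast
  then have "adjacent n x y"
    using adjacent_if_one_other_tour_within_union assms(2-4) by blast
  with assms(5) show False ..
qed

end
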